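(* Let $m$ be a positive integer, $n=m(m+1)/2$, write $\prod_{i=1}^m(1-X^i)=\sum_{i=0}^nc_iX^i$, and set $d_j=\sum_{i=0}^{n-j}c_i$ for $j=1,\dots,n$. Then for every non-empty $S\subseteq[1,m]$, $$\sum_{j=1}^n d_j\,r(j,S)=\sum_{j=1}^n d_j\,p(j,S)=\begin{cases}1&\text{if }S=[1,m],\\0&\text{otherwise.}\end{cases}$$
   Context: $p(k,S)$ is the number of partitions of $k$ all of whose parts lie in $S$. $r(k,S)$ is the number of partitions of $k$ whose set of distinct parts is exactly $S$. $[1,m]=\{1,\dots,m\}$. *)

theory Defs
  imports "HOL-Library.Multiset" "HOL-Computational_Algebra.Polynomial"
begin

definition partitions :: "nat \<Rightarrow> nat multiset set" where
  "partitions k = {M. (\<forall>x\<in>#M. 0 < x) \<and> sum_mset M = k}"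

definition p_part :: "nat \<Rightarrow> nat set \<Rightarrow> nat" where
  "p_part k S = card {M \<in> partitions k. set_mset M \<subseteq> S}"

definition r_part :: "nat \<Rightarrow> nat set \<Rightarrow> nat" where
  "r_part k S = card {M \<in> partitions k. set_mset M = S}"

definition euler_poly :: "nat \<Rightarrow> int poly" where
  "euler_poly m = (\<Prod>i=1..m. 1 - monom 1 i)"

definition c_coeff :: "nat \<Rightarrow> nat \<Rightarrow> int" where
  "c_coeff m i = coeff (euler_poly m) i"

definition d_coeff :: "nat \<Rightarrow> nat \<Rightarrow> int" where
  "d_coeff m j = (\<Sum>i=0..(m * (m + 1) div 2) - j. c_coeff m i)"

end

theory Submission
  imports Defs "HOL-Computational_Algebra.Polynomial_FPS"
begin

(* Write E = prod_{i=1..m} (1 - X^i) and, for T a finite set of positive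
   integers, Q_T = prod_{i in T} (1 - X^i).  The generating function of p(k,S) is the
   power series inverse of Q_S, and that of r(k,S) is X^(sum S) / Q_S, because a
   partition with part set exactly S is one copy of each element of S plus an arbitrary
   partition with parts in S.  Splitting E = Q_T * Q_S with T = [1,m] - S, the series
   E * P_S and E * R_S are the polynomials Q_T and X^(sum S) * Q_T, both of degree at
   most n.  Since E(1) = 0, the weights d_j turn sum_{j=1..n} d_j a_j into the sum of
   the first n+1 coefficients of E * A, i.e. into the value at 1 of that polynomial;
   both sums therefore equal Q_T(1), which is 1 iff T is empty, i.e. iff S = [1,m]. *)

unbundle fps_syntax

lemma member_le_sum_mset: "(x::nat) \<in># M \<Longrightarrow> x \<le> sum_mset M"
  by (induction M) auto

lemma size_le_sum_mset: "\<forall>x\<in>#M. 0 < (x::nat) \<Longrightarrow> size M \<le> sum_mset M"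
  by (induction M) auto

lemma partitions_subset_multisets_of_size:
  "partitions k \<subseteq> (\<Union>s\<le>k. multisets_of_size {1..k} s)"
proof
  fix M assume "M \<in> partitions k"
  then have pos: "\<forall>x\<in>#M. 0 < x" and sum: "sum_mset M = k" by (auto simp: partitions_def)
  have "set_mset M \<subseteq> {1..k}"
    using pos sum member_le_sum_mset by fastforce
  moreover have "size M \<le> k" using size_le_sum_mset[OF pos] sum by simp
  ultimately show "M \<in> (\<Union>s\<le>k. multisets_of_size {1..k} s)"
    by (auto simp: multisets_of_size_def)
qed

lemma finite_partitions: "finite (partitions k)"
  by (rule finite_subset[OF partitions_subset_multisets_of_size]) auto

lemma card_partitions_containing:
  assumes "set_mset N \<subseteq> A" and "\<forall>x\<in>#N. 0 < x"
  shows "card {M \<in> partitions k. set_mset M \<subseteq> A \<and> N \<subseteq># M}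
       = (if sum_mset N \<le> k then p_part (k - sum_mset N) A else 0)"
proof (cases "sum_mset N \<le> k")
  case True
  have "bij_betw (\<lambda>K. K + N) {K \<in> partitions (k - sum_mset N). set_mset K \<subseteq> A}
                                  {M \<in> partitions k. set_mset M \<subseteq> A \<and> N \<subseteq># M}"
  proof (rule bij_betwI[where g = "\<lambda>M. M - N"])
    show "(\<lambda>K. K + N) \<in> {K \<in> partitions (k - sum_mset N). set_mset K \<subseteq> A}
                      \<rightarrow> {M \<in> partitions k. set_mset M \<subseteq> A \<and> N \<subseteq># M}"
      using True assms by (auto simp: partitions_def)
    show "(\<lambda>M. M - N) \<in> {M \<in> partitions k. set_mset M \<subseteq> A \<and> N \<subseteq># M}
                      \<rightarrow> {K \<in> partitions (k - sum_mset N). set_mset K \<subseteq> A}"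
      by (auto simp: partitions_def sum_mset_diff dest: in_diffD)
  qed (auto simp: subset_mset.diff_add)
  then show ?thesis
    using True by (simp add: p_part_def bij_betw_same_card)
next
  case False
  have "sum_mset N \<le> sum_mset M" if "N \<subseteq># M" for M
    using that by (auto simp: subset_mset.le_iff_add)
  then have "{M \<in> partitions k. set_mset M \<subseteq> A \<and> N \<subseteq># M} = {}"
    using False by (force simp: partitions_def)
  then show ?thesis using False by (simp del: Collect_empty_eq)
qed


lemma p_part_empty: "p_part k {} = (if k = 0 then 1 else 0)"
proof -
  have "{M \<in> partitions k. set_mset M \<subseteq> {}} = (if k = 0 then {{#}} else {})"
    by (auto simp: partitions_def)
  then show ?thesis by (simp add: p_part_def)
qed

(* Recurrence for p: a partition with parts in insert s S either avoids s or contains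
   a copy of s, whose removal leaves a partition of k - s. *)
lemma p_part_insert:
  assumes "0 < s" and "s \<notin> S"
  shows "p_part k (insert s S) = p_part k S + (if s \<le> k then p_part (k - s) (insert s S) else 0)"
proof -
  let ?with = "{M \<in> partitions k. set_mset M \<subseteq> insert s S \<and> {#s#} \<subseteq># M}"
  let ?without = "{M \<in> partitions k. set_mset M \<subseteq> S}"
  have split: "{M \<in> partitions k. set_mset M \<subseteq> insert s S} = ?without \<union> ?with"
    by auto
  have "?without \<inter> ?with = {}" using assms(2) by auto
  moreover have "finite ?without" "finite ?with"
    using finite_partitions by auto
  ultimately have "p_part k (insert s S) = card ?without + card ?with"
    unfolding p_part_def split by (simp add: card_Un_disjoint)
  also have "card ?with = (if s \<le> k then p_part (k - s) (insert s S) else 0)"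
    using card_partitions_containing[of "{#s#}" "insert s S" k] assms(1) by simp
  finally show ?thesis by (simp add: p_part_def)
qed

(* A partition with part set exactly S is mset_set S plus a partition with parts in S. *)
lemma r_part_eq_p_part:
  assumes "finite S" and "\<forall>s\<in>S. 0 < s"
  shows "r_part k S = (if \<Sum>S \<le> k then p_part (k - \<Sum>S) S else 0)"
proof -
  have "{M \<in> partitions k. set_mset M = S}
      = {M \<in> partitions k. set_mset M \<subseteq> S \<and> mset_set S \<subseteq># M}"
    using assms(1) mset_set_set_mset_msubset by (fastforce dest: mset_subset_eqD)
  moreover have "sum_mset (mset_set S) = \<Sum>S"
    using assms(1) by (simp add: sum_unfold_sum_mset)
  ultimately show ?thesis
    using card_partitions_containing[of "mset_set S" S k] assms by (simp add: r_part_def)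
qed


definition p_gf :: "nat set \<Rightarrow> int fps" where
  "p_gf S = Abs_fps (\<lambda>k. int (p_part k S))"

definition factor_poly :: "nat set \<Rightarrow> int poly" where
  "factor_poly T = (\<Prod>i\<in>T. 1 - monom 1 i)"

lemma p_gf_insert:
  assumes "0 < s" and "s \<notin> S"
  shows "p_gf (insert s S) * (1 - fps_X ^ s) = p_gf S"
proof -
  have "p_gf (insert s S) = p_gf S + fps_X ^ s * p_gf (insert s S)"
    by (rule fps_ext) (simp add: p_gf_def fps_X_power_mult_nth p_part_insert[OF assms])
  then show ?thesis by (simp add: algebra_simps)
qed

lemma p_gf_inverse:
  assumes "finite S" and "\<forall>s\<in>S. 0 < s"
  shows "p_gf S * fps_of_poly (factor_poly S) = 1"
  using assms
proof (induction S rule: finite_induct)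
  case empty
  have "p_gf {} = 1"
    by (rule fps_ext) (simp add: p_gf_def p_part_empty)
  then show ?case by (simp add: factor_poly_def)
next
  case (insert s S)
  have "p_gf (insert s S) * fps_of_poly (factor_poly (insert s S))
      = (p_gf (insert s S) * (1 - fps_X ^ s)) * fps_of_poly (factor_poly S)"
    using insert.hyps
    by (simp add: factor_poly_def fps_of_poly_diff fps_of_poly_monom' mult.assoc)
  also have "\<dots> = 1"
    using insert by (simp add: p_gf_insert)
  finally show ?case .
qed

lemma r_gf_eq:
  assumes "finite S" and "\<forall>s\<in>S. 0 < s"
  shows "Abs_fps (\<lambda>k. int (r_part k S)) = fps_X ^ (\<Sum>S) * p_gf S"
  by (rule fps_ext) (simp add: r_part_eq_p_part[OF assms] fps_X_power_mult_nth p_gf_def)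

lemma degree_factor_poly: "degree (factor_poly T) \<le> \<Sum>T"
proof (cases "finite T")
  case True
  have "degree (factor_poly T) \<le> (\<Sum>i\<in>T. degree (1 - monom (1::int) i))"
    unfolding factor_poly_def using degree_prod_sum_le[OF True] by (simp add: o_def)
  also have "\<dots> \<le> \<Sum>T"
    by (rule sum_mono) (auto intro!: degree_diff_le simp: degree_monom_le)
  finally show ?thesis .
qed (simp add: factor_poly_def)

lemma poly_factor_poly_1:
  "finite T \<Longrightarrow> poly (factor_poly T) 1 = (if T = {} then 1 else 0)"
  by (simp add: factor_poly_def poly_prod poly_monom card_gt_0_iff)

lemma sum_coeffs_eq_poly_1:
  fixes R :: "'a::comm_ring_1 poly"
  assumes "degree R \<le> n"
  shows "(\<Sum>k\<le>n. coeff R k) = poly R 1"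
proof -
  have "poly R 1 = (\<Sum>k\<le>degree R. coeff R k)" by (simp add: poly_altdef)
  also have "\<dots> = (\<Sum>k\<le>n. coeff R k)"
    by (rule sum.mono_neutral_left) (use assms in \<open>auto simp: coeff_eq_0\<close>)
  finally show ?thesis by simp
qed

lemma tail_sums_convolution:
  fixes P :: "'a::comm_ring_1 poly"
  shows "(\<Sum>j\<le>n. (\<Sum>i\<le>n-j. coeff P i) * a j) = (\<Sum>k\<le>n. (fps_of_poly P * Abs_fps a) $ k)"
proof -
  have "(\<Sum>j\<le>n. (\<Sum>i\<le>n-j. coeff P i) * a j) = (\<Sum>(i,j)\<in>{(i,j). i + j \<le> n}. coeff P i * a j)"
  proof -
    have "(\<Sum>j\<le>n. (\<Sum>i\<le>n-j. coeff P i) * a j) = (\<Sum>(j,i)\<in>(SIGMA j:{..n}. {..n-j}). coeff P i * a j)"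
      by (simp add: sum.Sigma sum_distrib_right)
    also have "\<dots> = (\<Sum>(i,j)\<in>{(i,j). i + j \<le> n}. coeff P i * a j)"
      by (rule sum.reindex_bij_witness[where i = prod.swap and j = prod.swap]) auto
    finally show ?thesis .
  qed
  also have "\<dots> = (\<Sum>k\<le>n. \<Sum>i\<le>k. coeff P i * a (k - i))"
    by (rule sum.triangle_reindex_eq)
  also have "\<dots> = (\<Sum>k\<le>n. (fps_of_poly P * Abs_fps a) $ k)"
    by (simp add: fps_mult_nth atLeast0AtMost)
  finally show ?thesis .
qed


lemma tail_weighted_sum_eq_poly_1:
  fixes P Q :: "'a::comm_ring_1 poly"
  assumes "degree P \<le> n" and "poly P 1 = 0"
    and "fps_of_poly P * Abs_fps a = fps_of_poly Q" and "degree Q \<le> n"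
  shows "(\<Sum>j=1..n. (\<Sum>i\<le>n-j. coeff P i) * a j) = poly Q 1"
proof -
  have "(\<Sum>i\<le>n-0. coeff P i) = 0"
    using sum_coeffs_eq_poly_1[OF assms(1)] assms(2) by simp
  then have "(\<Sum>j=1..n. (\<Sum>i\<le>n-j. coeff P i) * a j) = (\<Sum>j\<le>n. (\<Sum>i\<le>n-j. coeff P i) * a j)"
    by (simp add: atMost_atLeast0 sum.atLeast_Suc_atMost)
  also have "\<dots> = (\<Sum>k\<le>n. coeff Q k)"
    unfolding tail_sums_convolution assms(3) by simp
  also have "\<dots> = poly Q 1"
    by (rule sum_coeffs_eq_poly_1[OF assms(4)])
  finally show ?thesis .
qed

theorem propositionA:
  fixes m :: nat and S :: "nat set"
  assumes "0 < m" and "S \<noteq> {}" and "S \<subseteq> {1..m}"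
  defines "n \<equiv> m * (m + 1) div 2"
  shows "(\<Sum>j=1..n. d_coeff m j * int (r_part j S)) = (\<Sum>j=1..n. d_coeff m j * int (p_part j S))
       \<and> (\<Sum>j=1..n. d_coeff m j * int (p_part j S)) = (if S = {1..m} then 1 else 0)"
proof -
  define T where "T = {1..m} - S"
  define E where "E = euler_poly m"
  have fin: "finite S" "finite T" and pos: "\<forall>s\<in>S. 0 < s"
    using assms(3) finite_subset by (auto simp: T_def)
  have n_sum: "\<Sum>{1..m} = n"
    using gauss_sum_from_Suc_0[of m, where ?'a = nat] by (simp add: n_def)
  have n_split: "n = \<Sum>S + \<Sum>T"
    using sum.subset_diff[OF assms(3), of id] n_sum by (simp add: T_def)
  have E_split: "E = factor_poly T * factor_poly S"
    using prod.subset_diff[OF assms(3)] by (simp add: E_def euler_poly_def factor_poly_def T_def)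
  have deg_E: "degree E \<le> n"
    using degree_factor_poly[of "{1..m}"] n_sum by (simp add: E_def euler_poly_def factor_poly_def)
  have E_1: "poly E 1 = 0"
    using poly_factor_poly_1[of "{1..m}"] assms(1) by (simp add: E_def euler_poly_def factor_poly_def)
  have d_eq: "d_coeff m j = (\<Sum>i\<le>n-j. coeff E i)" for j
    by (simp add: d_coeff_def c_coeff_def E_def n_def atMost_atLeast0)
  have inv: "p_gf S * fps_of_poly (factor_poly S) = 1"
    by (rule p_gf_inverse[OF fin(1) pos])
  have "fps_of_poly E * Abs_fps (\<lambda>j. int (p_part j S)) = fps_of_poly (factor_poly T)"
    using inv by (simp add: E_split fps_of_poly_mult p_gf_def[symmetric] algebra_simps)
  then have p_sum: "(\<Sum>j=1..n. d_coeff m j * int (p_part j S)) = poly (factor_poly T) 1"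
    unfolding d_eq
    by (rule tail_weighted_sum_eq_poly_1[OF deg_E E_1])
       (use degree_factor_poly[of T] n_split in simp)
  have "fps_of_poly E * Abs_fps (\<lambda>j. int (r_part j S)) = fps_of_poly (monom 1 (\<Sum>S) * factor_poly T)"
    using inv by (simp add: r_gf_eq[OF fin(1) pos] E_split fps_of_poly_mult fps_of_poly_monom'
                            algebra_simps)
  moreover have "degree (monom 1 (\<Sum>S) * factor_poly T) \<le> n"
    using degree_mult_le[of "monom 1 (\<Sum>S)" "factor_poly T"] degree_factor_poly[of T]
          degree_monom_le[of "1::int" "\<Sum>S"] n_split by linarith
  ultimately have r_sum: "(\<Sum>j=1..n. d_coeff m j * int (r_part j S)) = poly (factor_poly T) 1"
    unfolding d_eq using tail_weighted_sum_eq_poly_1[OF deg_E E_1] by (simp add: poly_monom)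
  have "T = {} \<longleftrightarrow> S = {1..m}"
    using assms(3) by (auto simp: T_def)
  then show ?thesis
    using p_sum r_sum poly_factor_poly_1[OF fin(2)] by simp
qed

end
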